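(* Let $m,n\ge1$ and let $\theta\vdash mn$ be $m$-splittable with $m$-split $(\theta^{(0)},\dots,\theta^{(m-1)})$. Then \[ H_\theta(x) = m^{mn} \prod_{r=0}^{m-1} \prod_{j=1}^{m} H_{\theta^{(r)}} \left( \frac{x+r-m+j}{m} \right). \]
   Context: With the rising factorial $x^{(k)}=x(x+1)\cdots(x+k-1)$, $H_\theta(x)=\prod_{i=1}^{l(\theta)}(x-i+1)^{(\theta_i)}=\prod_{w\in\theta}(x+c(w))$, where $c(w)=j-i$ is the content of the cell $w$ in row $i$, column $j$; $H_\emptyset=1$. A set $S\subseteq\mathbb{Z}$ satisfies the charge condition if $S\cap\mathbb{Z}_{\ge0}$ and $\mathbb{Z}_{<0}\setminus S$ are finite and have the same cardinality. For a partition $\lambda=(\lambda_1\ge\lambda_2\ge\cdots)$ (with $\lambda_k=0$ for $k>l(\lambda)$), $S_\lambda=\{\lambda_k-k: k\ge1\}$; $\lambda\mapsto S_\lambda$ is a bijection from partitions to sets satisfying the charge condition. The $m$-split of a set $S$ is $(S_0,\dots,S_{m-1})$ with $S_r=\{a\in\mathbb{Z}: ma+r\in S\}$. A partition $\theta$ is $m$-splittable if every $S_r$ in the $m$-split of $S_\theta$ satisfies the charge condition; its $m$-split is then $(\theta^{(0)},\dots,\theta^{(m-1)})$ where $\theta^{(r)}$ is the partition with $S_{\theta^{(r)}}=S_r$. *)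

theory Defs
  imports Complex_Main
begin

definition is_partition :: "nat list \<Rightarrow> bool" where
  "is_partition la \<longleftrightarrow> sorted (rev la) \<and> 0 \<notin> set la"

definition part :: "nat list \<Rightarrow> nat \<Rightarrow> nat" where
  "part la k = (if 1 \<le> k \<and> k \<le> length la then la ! (k - 1) else 0)"

definition Sset :: "nat list \<Rightarrow> int set" where
  "Sset la = {int (part la k) - int k | k. k \<ge> 1}"

definition charge_cond :: "int set \<Rightarrow> bool" where
  "charge_cond S \<longleftrightarrow> finite (S \<inter> {0..}) \<and> finite ({..<0} - S)
     \<and> card (S \<inter> {0..}) = card ({..<0} - S)"

definition msplit :: "nat \<Rightarrow> int set \<Rightarrow> nat \<Rightarrow> int set" where
  "msplit m S r = {a. int m * a + int r \<in> S}"

definition m_splittable :: "nat \<Rightarrow> nat list \<Rightarrow> bool" where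
  "m_splittable m th \<longleftrightarrow> (\<forall>r<m. charge_cond (msplit m (Sset th) r))"

definition H :: "nat list \<Rightarrow> 'a::field_char_0 \<Rightarrow> 'a" where
  "H la x = (\<Prod>i=1..length la. pochhammer (x - of_nat i + 1) (la ! (i - 1)))"

end

theory Submission
  imports Defs "HOL-Computational_Algebra.Polynomial"
begin

text \<open>
  Write \<open>y^(k)\<close> for the rising factorial. If \<open>\<lambda>\<close> has at most \<open>N\<close> parts, the
  truncated beta-set \<open>S\<^sub>\<lambda> \<inter> [-N, \<infinity>)\<close> is \<open>{\<lambda>\<^sub>i - i : 1 \<le> i \<le> N}\<close>, so the product
  of \<open>y^(t + N)\<close> over it is \<open>H\<^sub>\<lambda>(y + N - 1)\<close> times a factor depending only on \<open>N\<close>.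
  For \<open>N = mM\<close>, writing \<open>t = ma + r\<close> splits the truncated beta-set of \<open>\<theta>\<close> into those
  of its \<open>m\<close>-split, and the multiplication formula
  \<open>y^(r + mk) = y^(r) m^(mk) \<Prod>\<^sub>j ((y + r + j)/m)^(k)\<close> turns the product into values
  of the \<open>H\<^sub>\<theta>\<^sub>(\<^sub>r\<^sub>)\<close>. The same computation for the empty partition identifies all
  remaining factors, and the analogous one for the sum of \<open>t + N\<close> gives
  \<open>|\<theta>| = m \<Sum>\<^sub>r |\<theta>\<^sup>(\<^sup>r\<^sup>)|\<close>. This proves the identity multiplied by a polynomial
  in \<open>x\<close> that is not identically zero, which is then cancelled.
\<close>

definition polyfun :: "('a::comm_ring_1 \<Rightarrow> 'a) \<Rightarrow> bool" where
  "polyfun f \<longleftrightarrow> (\<exists>p. \<forall>x. f x = poly p x)"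

lemma polyfun_const: "polyfun (\<lambda>x. c)"
  unfolding polyfun_def by (rule exI[of _ "[:c:]"]) simp

lemma polyfun_id: "polyfun (\<lambda>x. x)"
  unfolding polyfun_def by (rule exI[of _ "[:0, 1:]"]) simp

lemma polyfun_add: "polyfun f \<Longrightarrow> polyfun g \<Longrightarrow> polyfun (\<lambda>x. f x + g x)"
  unfolding polyfun_def by (metis poly_add)

lemma polyfun_diff: "polyfun f \<Longrightarrow> polyfun g \<Longrightarrow> polyfun (\<lambda>x. f x - g x)"
  unfolding polyfun_def by (metis poly_diff)

lemma polyfun_mult: "polyfun f \<Longrightarrow> polyfun g \<Longrightarrow> polyfun (\<lambda>x. f x * g x)"
  unfolding polyfun_def by (metis poly_mult)

lemma polyfun_divide: "polyfun f \<Longrightarrow> polyfun (\<lambda>x. f x / (c::'a::field))"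
  unfolding divide_inverse by (rule polyfun_mult[OF _ polyfun_const])

lemma polyfun_compose: "polyfun f \<Longrightarrow> polyfun g \<Longrightarrow> polyfun (\<lambda>x. f (g x))"
  unfolding polyfun_def by (metis poly_pcompose)

lemma polyfun_prod: "(\<And>i. i \<in> A \<Longrightarrow> polyfun (f i)) \<Longrightarrow> polyfun (\<lambda>x. \<Prod>i\<in>A. f i x)"
  by (induction A rule: infinite_finite_induct) (simp_all add: polyfun_const polyfun_mult)

lemma polyfun_pochhammer: "polyfun f \<Longrightarrow> polyfun (\<lambda>x. pochhammer (f x) k)"
  unfolding pochhammer_prod by (intro polyfun_prod polyfun_add polyfun_const)

lemma polyfun_H: "polyfun (H la :: 'a::field_char_0 \<Rightarrow> 'a)"
  unfolding H_def
  by (intro polyfun_prod polyfun_pochhammer polyfun_add polyfun_diff polyfun_const polyfun_id)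

lemma polyfun_mult_right_cancel:
  fixes f g h :: "'a::field_char_0 \<Rightarrow> 'a"
  assumes "polyfun f" "polyfun g" "polyfun h"
    and "\<And>x. f x * g x = h x * g x" and "g x0 \<noteq> 0"
  shows "f x = h x"
proof -
  obtain p q r where p: "\<And>x. f x = poly p x" and q: "\<And>x. h x = poly q x"
    and r: "\<And>x. g x = poly r x"
    using assms(1-3) unfolding polyfun_def by metis
  have "poly (p * r) = poly (q * r)" using assms(4) by (auto simp: p q r)
  then have "p * r = q * r" by (simp add: poly_eq_poly_eq_iff)
  moreover have "r \<noteq> 0" using assms(5) r by auto
  ultimately show ?thesis by (simp add: p q)
qed

lemma pochhammer_mult_nat:
  fixes z :: "'a::field_char_0"
  assumes "m \<ge> 1"
  shows "pochhammer z (m * k) = of_nat m ^ (m * k) * (\<Prod>j<m. pochhammer ((z + of_nat j) / of_nat m) k)"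
proof (induction k)
  case 0
  then show ?case by simp
next
  case (Suc k)
  have "pochhammer z (m * Suc k) = pochhammer z (m * k) * pochhammer (z + of_nat (m * k)) m"
    using pochhammer_product'[of z "m * k" m] by (simp add: add.commute)
  also have "pochhammer (z + of_nat (m * k)) m = (\<Prod>j<m. z + of_nat (m * k) + of_nat j)"
    by (simp add: pochhammer_prod atLeast0LessThan)
  also have "\<dots> = (\<Prod>j<m. of_nat m * ((z + of_nat j) / of_nat m + of_nat k))"
    using assms by (intro prod.cong refl) (simp add: field_simps)
  also have "\<dots> = of_nat m ^ m * (\<Prod>j<m. (z + of_nat j) / of_nat m + of_nat k)"
    by (simp add: prod.distrib)
  finally show ?case
    using Suc by (simp add: pochhammer_Suc prod.distrib power_add mult_ac)
qed

lemma pochhammer_add_mult_nat: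
  fixes z :: "'a::field_char_0"
  assumes "m \<ge> 1"
  shows "pochhammer z (r + m * k) = pochhammer z r * (of_nat m ^ (m * k) *
           (\<Prod>j<m. pochhammer ((z + of_nat r + of_nat j) / of_nat m) k))"
  using assms by (simp add: pochhammer_product' pochhammer_mult_nat add.assoc)

lemma part_antimono:
  assumes "is_partition la" "1 \<le> i" "i \<le> j"
  shows "part la j \<le> part la i"
  using assms sorted_rev_nth_mono[of la "i - 1" "j - 1"]
  unfolding is_partition_def Defs.part_def by auto

lemma inj_on_Sset_index:
  assumes "is_partition la"
  shows "inj_on (\<lambda>k. int (part la k) - int k) {1..}"
proof (rule linorder_inj_onI')
  fix i j :: nat
  assume "i \<in> {1..}" "j \<in> {1..}" "i < j"
  with part_antimono[OF assms, of i j]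
  show "int (part la i) - int i \<noteq> int (part la j) - int j" by auto
qed

lemma Sset_inter_atLeast:
  assumes "length la \<le> N"
  shows "Sset la \<inter> {-int N..} = (\<lambda>k. int (part la k) - int k) ` {1..N}"
proof (intro equalityI subsetI)
  fix t assume "t \<in> Sset la \<inter> {-int N..}"
  then obtain k where k: "k \<ge> 1" "t = int (part la k) - int k" "t \<ge> - int N"
    unfolding Sset_def by auto
  have "k \<le> N"
  proof (rule ccontr)
    assume "\<not> k \<le> N"
    then have "part la k = 0" using assms unfolding Defs.part_def by auto
    with k \<open>\<not> k \<le> N\<close> show False by auto
  qed
  with k show "t \<in> (\<lambda>k. int (part la k) - int k) ` {1..N}" by auto
qed (auto simp: Sset_def)

lemma finite_Sset_inter_atLeast: "length la \<le> N \<Longrightarrow> finite (Sset la \<inter> {-int N..})"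
  by (simp add: Sset_inter_atLeast)

lemma (in comm_monoid_set) Sset_inter_atLeast_reindex:
  assumes "is_partition la" "length la \<le> N"
  shows "F (\<lambda>t. g (nat (t + int N))) (Sset la \<inter> {-int N..}) = F (\<lambda>i. g (part la i + (N - i))) {1..N}"
proof -
  have "inj_on (\<lambda>k. int (part la k) - int k) {1..N}"
    using inj_on_Sset_index[OF assms(1)] by (rule inj_on_subset) auto
  moreover have "nat (int (part la i) - int i + int N) = part la i + (N - i)" if "i \<le> N" for i
    using that by linarith
  ultimately show ?thesis
    unfolding Sset_inter_atLeast[OF assms(2)] by (auto simp: reindex intro: cong)
qed

lemma sum_part_eq_sum_list:
  assumes "length la \<le> N"
  shows "(\<Sum>i=1..N. part la i) = sum_list la"
proof -
  have "(\<Sum>i=1..N. part la i) = (\<Sum>i=1..length la. part la i)"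
    using assms by (intro sum.mono_neutral_right) (auto simp: Defs.part_def)
  also have "\<dots> = (\<Sum>i<length la. la ! i)"
    by (rule sum.reindex_bij_witness[of _ Suc "\<lambda>i. i - 1"]) (auto simp: Defs.part_def)
  finally show ?thesis by (simp add: sum_list_sum_nth atLeast0LessThan)
qed

lemma H_eq_prod_part:
  assumes "length la \<le> N"
  shows "H la x = (\<Prod>i=1..N. pochhammer (x - of_nat i + 1) (part la i))"
proof -
  have "H la x = (\<Prod>i=1..length la. pochhammer (x - of_nat i + 1) (part la i))"
    unfolding H_def by (intro prod.cong refl) (auto simp: Defs.part_def)
  also have "\<dots> = (\<Prod>i=1..N. pochhammer (x - of_nat i + 1) (part la i))"
    using assms by (intro prod.mono_neutral_left) (auto simp: Defs.part_def)
  finally show ?thesis .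
qed

definition pochhammer_staircase :: "nat \<Rightarrow> 'a::comm_semiring_1 \<Rightarrow> 'a" where
  "pochhammer_staircase N y = (\<Prod>i=1..N. pochhammer y (N - i))"

lemma pochhammer_staircase_1_neq_0: "pochhammer_staircase N (1::'a::field_char_0) \<noteq> 0"
  unfolding pochhammer_staircase_def by (simp add: pochhammer_fact[symmetric])

lemma prod_pochhammer_part_shift:
  fixes y :: "'a::field_char_0"
  assumes "length la \<le> N"
  shows "(\<Prod>i=1..N. pochhammer y (part la i + (N - i)))
           = H la (y + of_nat N - 1) * pochhammer_staircase N y"
proof -
  have "pochhammer y (part la i + (N - i))
          = pochhammer (y + of_nat N - 1 - of_nat i + 1) (part la i) * pochhammer y (N - i)"
    if "i \<in> {1..N}" for i
    using that pochhammer_product'[of y "N - i" "part la i"] by (simp add: of_nat_diff add.commute)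
  then show ?thesis
    unfolding pochhammer_staircase_def H_eq_prod_part[OF assms] prod.distrib[symmetric]
    by (rule prod.cong[OF refl])
qed

lemma bij_betw_msplit_inter_atLeast:
  assumes "m \<ge> 1"
  shows "bij_betw (\<lambda>(r, a). int m * a + int r)
           (SIGMA r:{..<m}. msplit m S r \<inter> {-int M..}) (S \<inter> {-int (m * M)..})"
proof (rule bij_betw_byWitness[where f' = "\<lambda>t. (nat (t mod int m), t div int m)"])
  have "int m * a + int r \<ge> - int (m * M)" if "a \<ge> - int M" for a r
    using mult_left_mono[OF that, of "int m"] by simp
  then show "(\<lambda>(r, a). int m * a + int r) ` (SIGMA r:{..<m}. msplit m S r \<inter> {-int M..})
               \<subseteq> S \<inter> {-int (m * M)..}"
    by (auto simp: msplit_def)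
  have "t div int m \<ge> - int M" if "t \<ge> - int (m * M)" for t
  proof -
    have "- int (m * M) div int m = - int M"
      using assms by (simp flip: mult_minus_right)
    then show ?thesis
      using zdiv_mono1[OF that, of "int m"] assms by simp
  qed
  then show "(\<lambda>t. (nat (t mod int m), t div int m)) ` (S \<inter> {-int (m * M)..})
               \<subseteq> (SIGMA r:{..<m}. msplit m S r \<inter> {-int M..})"
    using assms by (auto simp: msplit_def nat_less_iff)
qed (use assms in auto)

lemma (in comm_monoid_set) msplit_inter_atLeast_reindex:
  assumes "m \<ge> 1" and "\<And>r. r < m \<Longrightarrow> finite (msplit m S r \<inter> {-int M..})"
  shows "F g (S \<inter> {-int (m * M)..})
           = F (\<lambda>r. F (\<lambda>a. g (int m * a + int r)) (msplit m S r \<inter> {-int M..})) {..<m}"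
  using reindex_bij_betw[OF bij_betw_msplit_inter_atLeast[OF assms(1)], of g S M]
  by (simp add: Sigma assms(2) split_def)

locale bounded_msplit =
  fixes m M :: nat and la :: "nat list" and las :: "nat \<Rightarrow> nat list"
  assumes m_ge_1: "m \<ge> 1"
    and partition: "is_partition la"
    and length_le: "length la \<le> m * M"
    and split_partition: "\<And>r. r < m \<Longrightarrow> is_partition (las r)"
    and split_length_le: "\<And>r. r < m \<Longrightarrow> length (las r) \<le> M"
    and Sset_split: "\<And>r. r < m \<Longrightarrow> Sset (las r) = msplit m (Sset la) r"

lemma Sset_Nil: "Sset [] = {..<0}"
proof (intro equalityI subsetI)
  fix t :: int
  assume "t \<in> {..<0}"
  then have "t = int (part [] (nat (-t))) - int (nat (-t))" "nat (-t) \<ge> 1"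
    by (auto simp: Defs.part_def)
  then show "t \<in> Sset []" unfolding Sset_def by blast
qed (auto simp: Sset_def Defs.part_def)

lemma msplit_Sset_Nil:
  assumes "r < m"
  shows "msplit m (Sset []) r = Sset []"
proof -
  have "int m * a + int r < 0 \<longleftrightarrow> a < 0" for a
  proof
    assume "a < 0"
    then have "int m * a \<le> int m * (-1)" by (intro mult_left_mono) auto
    with assms show "int m * a + int r < 0" by simp
  qed (metis add_nonneg_nonneg not_le of_nat_0_le_iff zero_le_mult_iff)
  then show ?thesis unfolding msplit_def Sset_Nil by auto
qed

lemma bounded_msplit_Nil: "m \<ge> 1 \<Longrightarrow> bounded_msplit m M [] (\<lambda>_. [])"
  by unfold_locales (auto simp: is_partition_def msplit_Sset_Nil)

lemma (in comm_monoid_set) bounded_msplit_reindex: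
  assumes "bounded_msplit m M la las"
  shows "F (\<lambda>t. g (nat (t + int (m * M)))) (Sset la \<inter> {-int (m * M)..})
           = F (\<lambda>r. F (\<lambda>i. g (r + m * (part (las r) i + (M - i)))) {1..M}) {..<m}"
proof -
  interpret bounded_msplit m M la las by fact
  have residue: "nat (int m * a + int r + int m * int M) = r + m * nat (a + int M)"
    if "a \<ge> - int M" for a r
  proof -
    have "int (r + m * nat (a + int M)) = int m * a + int r + int m * int M"
      using that by (simp add: algebra_simps)
    then show ?thesis by linarith
  qed
  have "F (\<lambda>t. g (nat (t + int (m * M)))) (Sset la \<inter> {-int (m * M)..})
      = F (\<lambda>r. F (\<lambda>a. g (nat (int m * a + int r + int (m * M))))
                   (msplit m (Sset la) r \<inter> {-int M..})) {..<m}"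
    using m_ge_1 split_length_le
    by (intro msplit_inter_atLeast_reindex) (simp_all flip: Sset_split add: finite_Sset_inter_atLeast)
  also have "\<dots> = F (\<lambda>r. F (\<lambda>a. g (r + m * nat (a + int M))) (Sset (las r) \<inter> {-int M..})) {..<m}"
    by (intro cong refl) (simp_all add: Sset_split residue)
  also have "\<dots> = F (\<lambda>r. F (\<lambda>i. g (r + m * (part (las r) i + (M - i)))) {1..M}) {..<m}"
    using split_partition split_length_le
    by (intro cong refl Sset_inter_atLeast_reindex[where g = "\<lambda>k. g (r + m * k)" for r]) auto
  finally show ?thesis .
qed

context bounded_msplit
begin

lemma sum_list_plus_staircase:
  "sum_list la + (\<Sum>i=1..m * M. m * M - i)
     = (\<Sum>r<m. M * r + m * (sum_list (las r) + (\<Sum>i=1..M. M - i)))"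
proof -
  have "sum_list la + (\<Sum>i=1..m * M. m * M - i) = (\<Sum>i=1..m * M. part la i + (m * M - i))"
    by (simp only: sum.distrib sum_part_eq_sum_list[OF length_le])
  also have "\<dots> = (\<Sum>t\<in>Sset la \<inter> {-int (m * M)..}. nat (t + int (m * M)))"
    by (rule sum.Sset_inter_atLeast_reindex[OF partition length_le, of "\<lambda>k. k", symmetric])
  also have "\<dots> = (\<Sum>r<m. \<Sum>i=1..M. r + m * (part (las r) i + (M - i)))"
    using sum.bounded_msplit_reindex[OF bounded_msplit_axioms, of "\<lambda>k. k"] by simp
  also have "\<dots> = (\<Sum>r<m. M * r + m * (sum_list (las r) + (\<Sum>i=1..M. M - i)))"
  proof (intro sum.cong refl)
    fix r assume "r \<in> {..<m}"
    then have "(\<Sum>i=1..M. part (las r) i) = sum_list (las r)"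
      by (intro sum_part_eq_sum_list split_length_le) simp
    then show "(\<Sum>i=1..M. r + m * (part (las r) i + (M - i)))
                 = M * r + m * (sum_list (las r) + (\<Sum>i=1..M. M - i))"
      by (simp only: sum.distrib flip: sum_distrib_left) simp
  qed
  finally show ?thesis .
qed

lemma sum_list_eq_sum_msplit: "sum_list la = m * (\<Sum>r<m. sum_list (las r))"
  using sum_list_plus_staircase bounded_msplit.sum_list_plus_staircase[OF bounded_msplit_Nil[OF m_ge_1]]
  by (simp add: sum.distrib distrib_left sum_distrib_left)

lemma H_staircase_msplit:
  fixes y :: "'a::field_char_0"
  shows "H la (y + of_nat (m * M) - 1) * pochhammer_staircase (m * M) y
    = of_nat m ^ (m * (\<Sum>r<m. sum_list (las r)))
      * (\<Prod>r<m. \<Prod>j<m. H (las r) ((y + of_nat r + of_nat j) / of_nat m + of_nat M - 1))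
      * (\<Prod>r<m. pochhammer y r ^ M * of_nat m ^ (m * (\<Sum>i=1..M. M - i))
           * (\<Prod>j<m. pochhammer_staircase M ((y + of_nat r + of_nat j) / of_nat m)))"
proof -
  define z where "z r j = (y + of_nat r + of_nat j) / of_nat m" for r j :: nat
  define k where "k r i = part (las r) i + (M - i)" for r i
  have "H la (y + of_nat (m * M) - 1) * pochhammer_staircase (m * M) y
      = (\<Prod>i=1..m * M. pochhammer y (part la i + (m * M - i)))"
    by (rule prod_pochhammer_part_shift[OF length_le, symmetric])
  also have "\<dots> = (\<Prod>t\<in>Sset la \<inter> {-int (m * M)..}. pochhammer y (nat (t + int (m * M))))"
    by (rule prod.Sset_inter_atLeast_reindex[OF partition length_le, symmetric])
  also have "\<dots> = (\<Prod>r<m. \<Prod>i=1..M. pochhammer y (r + m * k r i))"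
    unfolding k_def by (rule prod.bounded_msplit_reindex[OF bounded_msplit_axioms])
  also have "\<dots> = (\<Prod>r<m. \<Prod>i=1..M. pochhammer y r *
                    (of_nat m ^ (m * k r i) * (\<Prod>j<m. pochhammer (z r j) (k r i))))"
    unfolding z_def using m_ge_1 by (simp add: pochhammer_add_mult_nat)
  also have "\<dots> = (\<Prod>r<m. pochhammer y r ^ M * of_nat m ^ (m * (\<Sum>i=1..M. k r i))
                    * (\<Prod>j<m. \<Prod>i=1..M. pochhammer (z r j) (k r i)))"
    by (intro prod.cong refl)
      (simp add: prod.distrib power_sum sum_distrib_left prod.swap[of _ "{..<m}"] mult.assoc)
  also have "\<dots> = (\<Prod>r<m. pochhammer y r ^ M * of_nat m ^ (m * (sum_list (las r) + (\<Sum>i=1..M. M - i)))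
                    * (\<Prod>j<m. H (las r) (z r j + of_nat M - 1) * pochhammer_staircase M (z r j)))"
  proof (intro prod.cong refl)
    fix r assume "r \<in> {..<m}"
    then have len: "length (las r) \<le> M" by (simp add: split_length_le)
    have "(\<Sum>i=1..M. k r i) = sum_list (las r) + (\<Sum>i=1..M. M - i)"
      unfolding k_def sum.distrib sum_part_eq_sum_list[OF len] ..
    moreover have "(\<Prod>i=1..M. pochhammer (z r j) (k r i))
                     = H (las r) (z r j + of_nat M - 1) * pochhammer_staircase M (z r j)" for j
      unfolding k_def by (rule prod_pochhammer_part_shift[OF len])
    ultimately show "pochhammer y r ^ M * of_nat m ^ (m * (\<Sum>i=1..M. k r i))
                       * (\<Prod>j<m. \<Prod>i=1..M. pochhammer (z r j) (k r i))
                     = pochhammer y r ^ M * of_nat m ^ (m * (sum_list (las r) + (\<Sum>i=1..M. M - i)))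
                       * (\<Prod>j<m. H (las r) (z r j + of_nat M - 1) * pochhammer_staircase M (z r j))"
      by simp
  qed
  also have "\<dots> = of_nat m ^ (m * (\<Sum>r<m. sum_list (las r)))
      * (\<Prod>r<m. \<Prod>j<m. H (las r) (z r j + of_nat M - 1))
      * (\<Prod>r<m. pochhammer y r ^ M * of_nat m ^ (m * (\<Sum>i=1..M. M - i))
           * (\<Prod>j<m. pochhammer_staircase M (z r j)))"
    by (simp add: prod.distrib power_add power_sum distrib_left sum_distrib_left mult_ac)
  finally show ?thesis unfolding z_def .
qed

lemma H_mult_staircase_msplit:
  fixes x :: "'a::field_char_0"
  shows "H la x * pochhammer_staircase (m * M) (x - of_nat (m * M) + 1)
    = of_nat m ^ (m * (\<Sum>r<m. sum_list (las r)))
      * (\<Prod>r<m. \<Prod>j=1..m. H (las r) ((x + of_nat r - of_nat m + of_nat j) / of_nat m))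
      * pochhammer_staircase (m * M) (x - of_nat (m * M) + 1)"
proof -
  define y where "y = x - of_nat (m * M) + 1"
  have x: "y + of_nat (m * M) - 1 = x" by (simp add: y_def)
  have shift: "(\<Prod>j<m. H (las r) ((y + of_nat r + of_nat j) / of_nat m + of_nat M - 1))
                 = (\<Prod>j=1..m. H (las r) ((x + of_nat r - of_nat m + of_nat j) / of_nat m))" for r
  proof -
    have "(y + of_nat r + of_nat j) / of_nat m + of_nat M - 1
            = (x + of_nat r - of_nat m + of_nat (Suc j)) / of_nat m" for j
      using m_ge_1 by (simp add: y_def field_simps)
    then show ?thesis by (simp add: prod.atLeast1_atMost_eq)
  qed
  note empty = bounded_msplit.H_staircase_msplit[OF bounded_msplit_Nil[OF m_ge_1], of y]
  show ?thesis
    using H_staircase_msplit[of y] empty unfolding x shift y_def[symmetric] by (simp add: H_def)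
qed

end

theorem mainTheorem4:
  fixes m n :: nat and th :: "nat list" and ths :: "nat \<Rightarrow> nat list" and x :: "'a::field_char_0"
  assumes "m \<ge> 1" and "n \<ge> 1"
    and "is_partition th" and "sum_list th = m * n"
    and "m_splittable m th"
    and "\<forall>r<m. is_partition (ths r) \<and> Sset (ths r) = msplit m (Sset th) r"
  shows "H th x = of_nat m ^ (m * n) *
           (\<Prod>r<m. \<Prod>j=1..m. H (ths r) ((x + of_nat r - of_nat m + of_nat j) / of_nat m))"
proof -
  define M where "M = length th + (\<Sum>r<m. length (ths r))"
  interpret bounded_msplit m M th ths
  proof
    have "length th \<le> M" by (simp add: M_def)
    also have "M \<le> m * M" using mult_le_mono1[OF assms(1), of M] by simp
    finally show "length th \<le> m * M" .
    show "length (ths r) \<le> M" if "r < m" for r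
      using that member_le_sum[of r "{..<m}" "\<lambda>r. length (ths r)"] by (simp add: M_def)
  qed (use assms in auto)
  have size: "(\<Sum>r<m. sum_list (ths r)) = n"
    using sum_list_eq_sum_msplit assms(1,4) by simp
  define D :: "'a \<Rightarrow> 'a" where "D x = pochhammer_staircase (m * M) (x - of_nat (m * M) + 1)" for x
  define R :: "'a \<Rightarrow> 'a" where "R x = of_nat m ^ (m * n) *
           (\<Prod>r<m. \<Prod>j=1..m. H (ths r) ((x + of_nat r - of_nat m + of_nat j) / of_nat m))" for x
  have "polyfun (H th :: 'a \<Rightarrow> 'a)" by (rule polyfun_H)
  moreover have "polyfun D" unfolding D_def pochhammer_staircase_def
    by (intro polyfun_prod polyfun_pochhammer polyfun_add polyfun_diff polyfun_const polyfun_id)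
  moreover have "polyfun R" unfolding R_def
    by (intro polyfun_mult polyfun_const polyfun_prod polyfun_compose[OF polyfun_H] polyfun_divide
        polyfun_add polyfun_diff polyfun_id)
  moreover have "H th x * D x = R x * D x" for x
    using H_mult_staircase_msplit[of x] unfolding D_def R_def size .
  moreover have "D (of_nat (m * M)) \<noteq> 0"
    by (simp add: D_def pochhammer_staircase_1_neq_0)
  ultimately have "H th x = R x" by (rule polyfun_mult_right_cancel)
  then show ?thesis unfolding R_def .
qed

end
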